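(* Let $\Gamma\subsetneqq\mathbb{R}^n$ be an open convex cone with vertex at the origin such that $\{\lambda:\lambda_i>0\ \forall i\}\subset\Gamma\subset\{\lambda:\sum_i\lambda_i>0\}$, and let $f$ be a smooth symmetric function on $\Gamma$ with $\frac{\partial f}{\partial\lambda_i}>0$ in $\Gamma$, $i=1,\dots,n$. Let $A=\mathrm{diag}(a_1,\dots,a_n)$ with $0<a_1\leq\cdots\leq a_n$, and assume $\frac{\partial f}{\partial\lambda_1}(\lambda(A))=\max_{1\leq i\leq n}\frac{\partial f}{\partial\lambda_i}(\lambda(A))$. Let $u$ be a twice differentiable function of $s>0$, regarded as $x\mapsto u(s)$ with $s=\frac12x^TAx$, such that $u'(s)>0$, $u''(s)\leq0$, and $$\lim_{s\to+\infty}u'(s)=1,\qquad \lim_{s\to+\infty}su''(s)=0.$$ Let $\delta>0$ be fixed. Then there exists $\bar s=\bar s(\delta,f,A)>0$ such that for all $s>\bar s$ both $\lambda(D^2u)$ and $(a_1u'+(2a_n+\delta)su'',a_2u',\dots,a_nu')$ lie in $\Gamma$ and $$f(\lambda(D^2u))\geq f\big(a_1u'+(2a_n+\delta)su'',\,a_2u',\dots,a_nu'\big).$$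
   Context: $\lambda(M)$ denotes the eigenvalues of a real symmetric matrix $M$ and $\lambda(A)=(a_1,\dots,a_n)$. $D^2u$ is the Hessian of $x\mapsto u(\frac12x^TAx)$; the derivatives $u',u''$ are evaluated at $s=\frac12x^TAx$. *)

theory Defs
  imports "HOL-Analysis.Analysis" "HOL-Computational_Algebra.Polynomial" "HOL-Library.Multiset"
begin

definition charpoly :: "real^'n^'n \<Rightarrow> real poly" where
  "charpoly M = det (\<chi> i j. (if i = j then [:0, 1:] else 0) - [: M $ i $ j :])"

text \<open>lambda(M): the eigenvalues of M (roots of the characteristic polynomial,
  counted with multiplicity), listed in increasing order w.r.t. the order of the index type.\<close>
definition eigvals :: "real^('n::{finite,linorder})^('n::{finite,linorder}) \<Rightarrow> real^('n::{finite,linorder})" where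
  "eigvals M = (SOME v. (\<forall>i j. i \<le> j \<longrightarrow> v $ i \<le> v $ j) \<and>
                        (\<Sum>i\<in>UNIV. {# v $ i #}) = proots (charpoly M))"

definition hessian :: "(real^'n \<Rightarrow> real) \<Rightarrow> real^'n \<Rightarrow> real^'n^'n" where
  "hessian g x = (\<chi> i j. frechet_derivative
        (\<lambda>y. frechet_derivative g (at y) (axis j 1)) (at x) (axis i 1))"

coinductive smooth_on :: "(real^'n) set \<Rightarrow> (real^'n \<Rightarrow> real) \<Rightarrow> bool" for S where
  "\<lbrakk> \<forall>x\<in>S. g differentiable (at x);
     \<forall>i. smooth_on S (\<lambda>x. frechet_derivative g (at x) (axis i 1)) \<rbrakk> \<Longrightarrow> smooth_on S g"

definition diag_mat :: "real^'n \<Rightarrow> real^'n^'n" where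
  "diag_mat a = (\<chi> i j. if i = j then a $ i else 0)"

end

theory Submission
  imports Defs
begin

(*
  The Hessian of u(x^T A x / 2) is u' A + u'' (A x)(A x)^T, a rank-one perturbation of u' A
  with nonpositive coefficient.  By Courant-Fischer its increasingly sorted eigenvalues satisfy
  lambda_i <= u' a_i, and their total defect sum_i (u' a_i - lambda_i) = -u'' |A x|^2 is at most
  2 a_n g, where g = -s u''.  Hence lambda(D^2 u) arises from the comparison vector V by adding
  (2 a_n + delta) g to the first coordinate and subtracting nonnegative amounts of total at most
  2 a_n g.  As s -> oo both vectors tend to a = lambda(A), where df/dlambda_1 is maximal; by
  continuity of the partial derivatives near a the gain delta g in the first coordinate outweighs
  the loss, and the mean value theorem on the segment from V to lambda(D^2 u) gives the inequality.
*)

section \<open>Spectral theory of real symmetric matrices\<close>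

lemma symmetric_matrix_inner_commute:
  fixes M :: "real^'n^'n"
  assumes "transpose M = M"
  shows "(M *v x) \<bullet> y = x \<bullet> (M *v y)"
  by (metis assms dot_lmul_matrix vector_transpose_matrix)

lemma transpose_mult_mult_entry:
  fixes P X :: "real^'n^'n"
  shows "(transpose P ** X ** P) $ j $ k = column j P \<bullet> (X *v column k P)"
proof -
  have "(transpose P ** X ** P) $ j $ k = (\<Sum>l\<in>UNIV. \<Sum>i\<in>UNIV. P$i$j * X$i$l * P$l$k)"
    by (simp add: matrix_matrix_mult_def transpose_def sum_distrib_right)
  also have "\<dots> = (\<Sum>i\<in>UNIV. \<Sum>l\<in>UNIV. P$i$j * X$i$l * P$l$k)"
    by (rule sum.swap)
  also have "\<dots> = column j P \<bullet> (X *v column k P)"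
    by (simp add: matrix_vector_mult_def inner_vec_def column_def sum_distrib_left mult_ac)
  finally show ?thesis .
qed

lemma inner_matrix_conj:
  fixes P X :: "real^'n^'n"
  shows "(P *v y) \<bullet> (X *v (P *v z)) = y \<bullet> ((transpose P ** X ** P) *v z)"
  by (metis dot_lmul_matrix matrix_vector_mul_assoc vector_transpose_matrix)

lemma orthogonal_matrix_column_inner:
  fixes P :: "real^'n^'n"
  assumes "orthogonal_matrix P"
  shows "column j P \<bullet> column k P = (if j = k then 1 else 0)"
  using assms unfolding orthogonal_matrix matrix_mult_transpose_dot_column
  by (auto simp: vec_eq_iff mat_def)

lemma diag_mat_mult_vector: "diag_mat d *v y = (\<chi> i. d $ i * y $ i)"
  by (simp add: diag_mat_def matrix_vector_mult_def vec_eq_iff if_distrib[of "\<lambda>z. z * _"] cong: if_cong)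

lemma inner_diag_mat: "y \<bullet> (diag_mat d *v y) = (\<Sum>i\<in>UNIV. d $ i * (y $ i)\<^sup>2)"
  by (simp add: diag_mat_mult_vector inner_vec_def power2_eq_square mult_ac)

lemma trace_diag_mat: "trace (diag_mat d) = (\<Sum>i\<in>UNIV. d $ i)"
  by (simp add: trace_def diag_mat_def)

lemma trace_orthogonal_conj:
  fixes P M :: "real^'n^'n"
  assumes "orthogonal_matrix P"
  shows "trace (transpose P ** M ** P) = trace M"
  using assms unfolding orthogonal_matrix_def
  by (metis matrix_mul_assoc matrix_mul_rid trace_mul_sym)

lemma nonpos_if_linear_le_quadratic:
  fixes c d :: real
  assumes "\<And>t. t > 0 \<Longrightarrow> 2 * t * c \<le> t\<^sup>2 * d"
  shows "c \<le> 0"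
proof (rule ccontr)
  assume "\<not> c \<le> 0"
  define t where "t = c / (\<bar>d\<bar> + 1)"
  have t: "t > 0" using \<open>\<not> c \<le> 0\<close> by (simp add: t_def)
  have "2 * c \<le> t * d"
    using assms[OF t] t by (simp add: power2_eq_square)
  also have "\<dots> \<le> t * \<bar>d\<bar>"
    using t by (simp add: mult_left_mono)
  also have "\<dots> < c"
    using \<open>\<not> c \<le> 0\<close> by (simp add: t_def field_simps)
  finally show False using \<open>\<not> c \<le> 0\<close> by simp
qed

lemma rayleigh_maximizer_is_eigenvector:
  fixes M :: "real^'n^'n"
  assumes sym: "transpose M = M" and S: "subspace S" and inv: "\<And>x. x \<in> S \<Longrightarrow> M *v x \<in> S"
    and v: "v \<in> S" "v \<bullet> v = 1"
    and max: "\<And>z. z \<in> S \<Longrightarrow> z \<bullet> (M *v z) \<le> (v \<bullet> (M *v v)) * (z \<bullet> z)"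
  shows "M *v v = (v \<bullet> (M *v v)) *\<^sub>R v"
proof -
  define l where "l = v \<bullet> (M *v v)"
  define w where "w = M *v v - l *\<^sub>R v"
  have w: "w \<in> S"
    unfolding w_def using inv v S by (simp add: subspace_diff subspace_scale)
  have vw: "v \<bullet> w = 0"
    using v(2) by (simp add: w_def l_def inner_diff_right)
  have "M *v v = w + l *\<^sub>R v"
    by (simp add: w_def)
  then have wMv: "w \<bullet> (M *v v) = w \<bullet> w"
    by (simp add: inner_add_right vw inner_commute)
  have "2 * t * (w \<bullet> w) \<le> t\<^sup>2 * (l * (w \<bullet> w) - w \<bullet> (M *v w))" for t
  proof -
    have "v + t *\<^sub>R w \<in> S"
      using v w S by (simp add: subspace_add subspace_scale)
    then have "(v + t *\<^sub>R w) \<bullet> (M *v (v + t *\<^sub>R w)) \<le> l * ((v + t *\<^sub>R w) \<bullet> (v + t *\<^sub>R w))"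
      unfolding l_def by (rule max)
    moreover have "v \<bullet> (M *v w) = w \<bullet> (M *v v)"
      using symmetric_matrix_inner_commute[OF sym, of w v] by (simp add: inner_commute)
    ultimately show ?thesis
      by (simp add: l_def[symmetric] wMv v vw inner_commute power2_eq_square algebra_simps)
  qed
  then have "w \<bullet> w \<le> 0"
    by (intro nonpos_if_linear_le_quadratic)
  then have "w = 0"
    by (metis inner_eq_zero_iff inner_ge_zero order_antisym)
  then show ?thesis
    by (simp add: w_def l_def)
qed

lemma symmetric_matrix_eigenvector_in_invariant_subspace:
  fixes M :: "real^'n^'n"
  assumes sym: "transpose M = M" and S: "subspace S" and inv: "\<And>x. x \<in> S \<Longrightarrow> M *v x \<in> S"
    and x0: "x0 \<in> S" "x0 \<noteq> 0"
  obtains v l where "v \<in> S" "norm v = 1" "M *v v = l *\<^sub>R v"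
proof -
  let ?q = "\<lambda>x. x \<bullet> (M *v x)"
  let ?K = "S \<inter> sphere 0 1"
  have unit: "(1 / norm z) *\<^sub>R z \<in> ?K" if "z \<in> S" "z \<noteq> 0" for z
    using that S by (simp add: subspace_scale)
  have "compact ?K"
    using compact_Int_closed[OF compact_sphere closed_subspace[OF S]] by (simp add: Int_commute)
  moreover have "?K \<noteq> {}"
    using unit[OF x0] by blast
  moreover have "continuous_on ?K ?q"
    by (intro continuous_on_inner continuous_on_id linear_continuous_on matrix_vector_mul_bounded_linear)
  ultimately obtain v where v: "v \<in> ?K" and vmax: "\<forall>y\<in>?K. ?q y \<le> ?q v"
    using continuous_attains_sup by blast
  have "?q z \<le> ?q v * (z \<bullet> z)" if z: "z \<in> S" for z
  proof (cases "z = 0")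
    case False
    have "?q ((1 / norm z) *\<^sub>R z) \<le> ?q v"
      using vmax unit[OF z False] by blast
    then have "?q z / (norm z)\<^sup>2 \<le> ?q v"
      by (simp only: matrix_vector_mult_scaleR inner_scaleR_left inner_scaleR_right)
        (simp add: power2_eq_square)
    moreover have "z \<bullet> z = (norm z)\<^sup>2"
      by (simp add: power2_norm_eq_inner)
    ultimately show ?thesis
      using False by (simp add: divide_le_eq mult.commute)
  qed simp
  then have "M *v v = ?q v *\<^sub>R v"
    using v by (intro rayleigh_maximizer_is_eigenvector[OF sym S inv]) (auto simp: norm_eq_1)
  then show thesis
    using v that by auto
qed

lemma dim_orthogonal_slice:
  fixes S :: "'a::euclidean_space set"
  assumes S: "subspace S" and v: "v \<in> S" "norm v = 1"
  shows "dim {x\<in>S. orthogonal v x} + 1 = dim S"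
proof -
  define S' where "S' = {x\<in>S. orthogonal v x}"
  have vv: "v \<bullet> v = 1"
    using v(2) by (simp add: norm_eq_1)
  have "subspace S'"
    using S by (auto simp: S'_def subspace_def orthogonal_clauses)
  moreover have "v \<notin> S'"
    using vv by (simp add: S'_def orthogonal_def)
  then have "S' \<subset> S"
    using v(1) by (auto simp: S'_def)
  ultimately have "dim S' < dim S"
    using S by (metis dim_psubset span_eq_iff)
  moreover have "S \<subseteq> span (insert v S')"
  proof
    fix x assume x: "x \<in> S"
    have "x - (v \<bullet> x) *\<^sub>R v \<in> S'"
      using x v(1) S vv by (simp add: S'_def orthogonal_def subspace_diff subspace_scale inner_diff_right)
    then have "(x - (v \<bullet> x) *\<^sub>R v) + (v \<bullet> x) *\<^sub>R v \<in> span (insert v S')"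
      by (intro span_add span_mul) (auto intro: span_base)
    then show "x \<in> span (insert v S')"
      by simp
  qed
  then have "dim S \<le> dim (insert v S')"
    by (metis dim_span dim_subset)
  moreover have "dim (insert v S') \<le> dim S' + 1"
    by (simp add: dim_insert)
  ultimately show ?thesis
    by (simp add: S'_def)
qed

lemma symmetric_matrix_orthonormal_eigenbasis:
  fixes M :: "real^'n^'n"
  assumes sym: "transpose M = M"
  shows "subspace S \<Longrightarrow> (\<And>x. x \<in> S \<Longrightarrow> M *v x \<in> S) \<Longrightarrow>
    \<exists>B. B \<subseteq> S \<and> finite B \<and> card B = dim S \<and> pairwise orthogonal B \<and>
        (\<forall>b\<in>B. norm b = 1 \<and> (\<exists>l. M *v b = l *\<^sub>R b))"
proof (induction "dim S" arbitrary: S rule: less_induct)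
  case less
  show ?case
  proof (cases "dim S = 0")
    case True
    then show ?thesis
      by (intro exI[of _ "{}"]) simp
  next
    case False
    then obtain x0 where "x0 \<in> S" "x0 \<noteq> 0"
      by auto
    then obtain v l where v: "v \<in> S" "norm v = 1" "M *v v = l *\<^sub>R v"
      using symmetric_matrix_eigenvector_in_invariant_subspace[OF sym less.prems] by blast
    define S' where "S' = {x\<in>S. orthogonal v x}"
    have dim: "dim S' + 1 = dim S"
      unfolding S'_def using less.prems(1) v(1,2) by (rule dim_orthogonal_slice)
    have S': "subspace S'"
      using less.prems(1) by (auto simp: S'_def subspace_def orthogonal_clauses)
    have "M *v x \<in> S'" if "x \<in> S'" for x
    proof -
      have "v \<bullet> (M *v x) = l * (v \<bullet> x)"
        using symmetric_matrix_inner_commute[OF sym, of v x] v(3) by simp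
      then show ?thesis
        using that less.prems(2) by (simp add: S'_def orthogonal_def)
    qed
    then obtain B' where B': "B' \<subseteq> S'" "finite B'" "card B' = dim S'" "pairwise orthogonal B'"
      "\<forall>b\<in>B'. norm b = 1 \<and> (\<exists>l. M *v b = l *\<^sub>R b)"
      using less.hyps[OF _ S'] dim by fastforce
    have "v \<notin> B'"
      using B'(1) v(2) by (auto simp: S'_def orthogonal_def norm_eq_1)
    show ?thesis
    proof (intro exI[of _ "insert v B'"] conjI)
      show "card (insert v B') = dim S"
        using B'(2,3) \<open>v \<notin> B'\<close> dim by simp
      show "pairwise orthogonal (insert v B')"
        using B'(1,4) by (auto simp: pairwise_insert S'_def orthogonal_commute)
      show "insert v B' \<subseteq> S"
        using B'(1) v(1) by (auto simp: S'_def)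
      show "finite (insert v B')"
        using B'(2) by simp
      show "\<forall>b\<in>insert v B'. norm b = 1 \<and> (\<exists>l. M *v b = l *\<^sub>R b)"
        using B'(5) v(2,3) by blast
    qed
  qed
qed

lemma symmetric_matrix_diagonalizable:
  fixes M :: "real^'n^'n"
  assumes sym: "transpose M = M"
  obtains P d where "orthogonal_matrix P" "transpose P ** M ** P = diag_mat d"
proof -
  obtain B where B: "finite B" "card B = CARD('n)" "pairwise orthogonal B"
    "\<forall>b\<in>B. norm b = 1 \<and> (\<exists>l. M *v b = l *\<^sub>R b)"
    using symmetric_matrix_orthonormal_eigenbasis[OF sym, of UNIV] by auto
  then obtain h where h: "bij_betw h (UNIV :: 'n set) B"
    using finite_same_card_bij[of "UNIV :: 'n set" B] by auto
  then have hB: "h j \<in> B" and h_inj: "h j = h k \<longleftrightarrow> j = k" for j k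
    by (auto simp: bij_betw_def inj_on_def)
  have "\<forall>j. \<exists>l. M *v h j = l *\<^sub>R h j"
    using B(4) hB by blast
  then obtain l where l: "\<And>j. M *v h j = l j *\<^sub>R h j"
    by metis
  define P :: "real^'n^'n" where "P = (\<chi> i j. h j $ i)"
  have col: "column j P = h j" for j
    by (simp add: P_def column_def vec_eq_iff)
  have P: "orthogonal_matrix P"
    using B(3,4) hB h_inj
    by (auto simp: orthogonal_matrix_orthonormal_columns col pairwise_def)
  have "transpose P ** M ** P = diag_mat (\<chi> j. l j)"
    using orthogonal_matrix_column_inner[OF P]
    by (simp add: vec_eq_iff transpose_mult_mult_entry col l diag_mat_def)
  with P that show thesis
    by blast
qed

lemma poly_det: "poly (det (A :: real poly^'n^'n)) t = det (\<chi> i j. poly (A $ i $ j) t)"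
  unfolding det_def by (simp add: poly_sum poly_prod of_int_poly)

lemma poly_charpoly: "poly (charpoly M) t = det (mat t - M)"
  unfolding charpoly_def poly_det
  by (rule arg_cong[where f = det]) (simp add: vec_eq_iff mat_def)

lemma charpoly_orthogonal_conj:
  fixes P M :: "real^'n^'n"
  assumes P: "orthogonal_matrix P"
  shows "charpoly (transpose P ** M ** P) = charpoly M"
proof -
  have mat_mult: "mat t *v x = t *\<^sub>R x" for t and x :: "real^'n"
    by (simp add: vec_eq_iff matrix_vector_mult_def mat_def if_distrib[of "\<lambda>a. a * _"] cong: if_cong)
  have conj: "transpose P ** (mat t - M) ** P = mat t - transpose P ** M ** P" for t
    using orthogonal_matrix_column_inner[OF P]
    by (simp add: vec_eq_iff transpose_mult_mult_entry matrix_vector_mult_diff_rdistrib mat_mult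
        inner_diff_right, simp add: mat_def)
  have "det P * det P = 1"
    using det_orthogonal_matrix[OF P] by auto
  then have "det (mat t - transpose P ** M ** P) = det (mat t - M)" for t
    unfolding conj[symmetric] by (simp add: det_mul mult_ac)
  then show ?thesis
    by (intro poly_eq_poly_eq_iff[THEN iffD1]) (simp add: fun_eq_iff poly_charpoly)
qed

lemma charpoly_diag_mat: "charpoly (diag_mat d) = (\<Prod>j\<in>UNIV. [:- d $ j, 1:])"
proof -
  have "det (mat t - diag_mat d) = (\<Prod>j\<in>UNIV. t - d $ j)" for t
    by (subst det_diagonal) (auto simp: diag_mat_def mat_def)
  then show ?thesis
    by (intro poly_eq_poly_eq_iff[THEN iffD1]) (simp add: fun_eq_iff poly_charpoly poly_prod)
qed

lemma sum_singleton_mset_eq_image_mset: "(\<Sum>i\<in>A. {#f i#}) = image_mset f (mset_set A)"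
  by (simp add: sum_unfold_sum_mset)

lemma sorted_vec_exists:
  fixes w :: "'a::linorder^'n::{finite,linorder}"
  shows "\<exists>v::'a^('n::{finite,linorder}). (\<forall>i j. i \<le> j \<longrightarrow> v $ i \<le> v $ j) \<and>
    (\<Sum>i\<in>UNIV. {#v $ i#}) = (\<Sum>i\<in>UNIV. {#w $ i#})"
proof -
  define xs where "xs = sorted_list_of_set (UNIV :: 'n set)"
  define ys where "ys = sort (map (($) w) xs)"
  have len: "length ys = CARD('n)"
    by (simp add: ys_def xs_def)
  define rank :: "'n::{finite,linorder} \<Rightarrow> nat" where "rank i = card {j. j < i}" for i
  have rank_mono: "rank i \<le> rank j" if "i \<le> j" for i j
    unfolding rank_def using that by (intro card_mono) auto
  have "strict_mono rank"
    unfolding rank_def by (intro strict_monoI psubset_card_mono) auto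
  then have "inj rank"
    by (rule strict_mono_imp_inj_on)
  moreover have "rank ` UNIV \<subseteq> {..<CARD('n)}"
    unfolding rank_def by (auto intro!: psubset_card_mono)
  ultimately have bij: "bij_betw rank UNIV {..<CARD('n)}"
    by (simp add: bij_betw_def card_image card_subset_eq)
  define v where "v = (\<chi> i. ys ! rank i)"
  have "v $ i \<le> v $ j" if "i \<le> j" for i j
    unfolding v_def using rank_mono[OF that] bij len
    by (auto simp: ys_def bij_betw_def intro!: sorted_nth_mono)
  moreover have "(\<Sum>i\<in>UNIV. {#v $ i#}) = (\<Sum>i\<in>UNIV. {#w $ i#})"
  proof -
    have "(\<Sum>i\<in>UNIV. {#v $ i#}) = (\<Sum>p\<in>{..<CARD('n)}. {#ys ! p#})"
      unfolding v_def using sum.reindex_bij_betw[OF bij, of "\<lambda>p. {#ys ! p#}"] by simp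
    also have "\<dots> = mset (map (nth ys) [0..<length ys])"
      by (simp add: sum_singleton_mset_eq_image_mset len atLeast0LessThan)
    also have "\<dots> = mset ys"
      by (simp add: map_nth)
    also have "\<dots> = (\<Sum>i\<in>UNIV. {#w $ i#})"
      by (simp add: ys_def xs_def sum_singleton_mset_eq_image_mset flip: sorted_list_of_mset_set)
    finally show ?thesis .
  qed
  ultimately show ?thesis
    by blast
qed

lemma eigvals_of_orthogonal_diagonalization:
  fixes M Q :: "real^('n::{finite,linorder})^('n::{finite,linorder})"
  assumes Q: "orthogonal_matrix Q" and QMQ: "transpose Q ** M ** Q = diag_mat d"
  shows "(\<forall>i j. i \<le> j \<longrightarrow> eigvals M $ i \<le> eigvals M $ j) \<and>
    (\<Sum>i\<in>UNIV. {#eigvals M $ i#}) = (\<Sum>j\<in>UNIV. {#d $ j#})"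
proof -
  have cp: "charpoly M = (\<Prod>j\<in>UNIV. [:- d $ j, 1:])"
    using charpoly_orthogonal_conj[OF Q, of M] by (simp add: QMQ charpoly_diag_mat)
  have roots: "proots (charpoly M) = (\<Sum>j\<in>UNIV. {#d $ j#})"
    unfolding cp by (subst proots_prod) auto
  show ?thesis
    unfolding eigvals_def roots[symmetric] by (rule someI_ex) (unfold roots, rule sorted_vec_exists)
qed

lemma eigvals_sorted:
  fixes M :: "real^('n::{finite,linorder})^('n::{finite,linorder})"
  assumes "transpose M = M" and "i \<le> j"
  shows "eigvals M $ i \<le> eigvals M $ j"
proof -
  obtain Q d where "orthogonal_matrix Q" "transpose Q ** M ** Q = diag_mat d"
    using symmetric_matrix_diagonalizable[OF assms(1)] by blast
  then show ?thesis
    using eigvals_of_orthogonal_diagonalization assms(2) by blast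
qed

theorem symmetric_matrix_eigvals_diagonalization:
  fixes M :: "real^('n::{finite,linorder})^('n::{finite,linorder})"
  assumes sym: "transpose M = M"
  obtains P where "orthogonal_matrix P" "transpose P ** M ** P = diag_mat (eigvals M)"
proof -
  obtain Q d where Q: "orthogonal_matrix Q" and QMQ: "transpose Q ** M ** Q = diag_mat d"
    using symmetric_matrix_diagonalizable[OF sym] by blast
  then have "image_mset (($) (eigvals M)) (mset_set UNIV) = image_mset (($) d) (mset_set UNIV)"
    using eigvals_of_orthogonal_diagonalization[OF Q QMQ] by (simp add: sum_singleton_mset_eq_image_mset)
  then obtain p where p: "p permutes UNIV" and eig: "\<forall>i\<in>UNIV. eigvals M $ i = d $ p i"
    using image_mset_eq_implies_permutes[OF finite_class.finite_UNIV] by blast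
  have p_eq: "p j = p k \<longleftrightarrow> j = k" for j k
    using permutes_inj[OF p] by (simp add: inj_eq)
  define P where "P = (\<chi> i j. Q $ i $ p j)"
  have col: "column j P = column (p j) Q" for j
    by (simp add: P_def column_def)
  have "orthogonal_matrix P"
    using Q unfolding orthogonal_matrix_orthonormal_columns col by (simp add: p_eq)
  moreover have "(transpose P ** M ** P) $ j $ k = (transpose Q ** M ** Q) $ p j $ p k" for j k
    by (simp add: transpose_mult_mult_entry col)
  then have "transpose P ** M ** P = diag_mat (eigvals M)"
    by (simp add: QMQ vec_eq_iff diag_mat_def eig p_eq)
  ultimately show thesis
    by (rule that)
qed

lemma sum_eigvals_eq_trace:
  fixes M :: "real^('n::{finite,linorder})^('n::{finite,linorder})"
  assumes "transpose M = M"
  shows "(\<Sum>i\<in>UNIV. eigvals M $ i) = trace M"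
proof -
  obtain P where P: "orthogonal_matrix P" and PMP: "transpose P ** M ** P = diag_mat (eigvals M)"
    using symmetric_matrix_eigvals_diagonalization[OF assms] by blast
  show ?thesis
    using trace_orthogonal_conj[OF P, of M] by (simp add: PMP trace_diag_mat)
qed

lemma subspaces_Int_nonzero:
  fixes S T :: "(real^'n) set"
  assumes S: "subspace S" and T: "subspace T" and dim: "CARD('n) < dim S + dim T"
  obtains w where "w \<in> S" "w \<in> T" "w \<noteq> 0"
proof -
  have "dim {x + y |x y. x \<in> S \<and> y \<in> T} + dim (S \<inter> T) = dim S + dim T"
    by (rule dim_sums_Int[OF S T])
  moreover have "dim {x + y |x y. x \<in> S \<and> y \<in> T} \<le> CARD('n)"
    by (rule dim_subset_UNIV_cart)
  ultimately have "dim (S \<inter> T) \<noteq> 0"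
    using dim by linarith
  then show thesis
    using that by (auto simp: subset_iff)
qed

lemma orthogonal_image_meets_initial_coordinates:
  fixes P :: "real^('n::{finite,linorder})^('n::{finite,linorder})"
  assumes P: "orthogonal_matrix P"
  obtains y where "\<And>j. \<not> k \<le> j \<Longrightarrow> y $ j = 0" "\<And>i. \<not> i \<le> k \<Longrightarrow> (P *v y) $ i = 0" "y \<noteq> 0"
proof -
  define Y where "Y = {y::real^('n::{finite,linorder}). \<forall>j. \<not> k \<le> j \<longrightarrow> y $ j = 0}"
  define T where "T = {w::real^('n::{finite,linorder}). \<forall>i. \<not> i \<le> k \<longrightarrow> w $ i = 0}"
  have "transpose P ** P = mat 1"
    using P by (simp add: orthogonal_matrix)
  then have "inj ((*v) P)"
    by (metis injI matrix_vector_mul_assoc matrix_vector_mul_lid)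
  then have "dim ((*v) P ` Y) = dim Y"
    by (intro dim_image_eq[OF matrix_vector_mul_linear]) (auto intro: inj_on_subset)
  also have "dim Y = card {j. k \<le> j}"
    using dim_substandard_cart[of "{j. k \<le> j}"] by (simp add: Y_def dim_vec_eq[symmetric])
  finally have dimS: "dim ((*v) P ` Y) = card {j. k \<le> j}" .
  have dimT: "dim T = card {i. i \<le> k}"
    using dim_substandard_cart[of "{i. i \<le> k}"] by (simp add: T_def dim_vec_eq[symmetric])
  have "{j. k \<le> j} \<union> {i. i \<le> k} = UNIV" "{j. k \<le> j} \<inter> {i. i \<le> k} = {k}"
    by (auto intro: antisym)
  then have "card {j. k \<le> j} + card {i. i \<le> k} = CARD('n) + 1"
    using card_Un_Int[of "{j. k \<le> j}" "{i. i \<le> k}"] by simp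
  then have "CARD('n) < dim ((*v) P ` Y) + dim T"
    by (simp add: dimS dimT)
  moreover have "subspace ((*v) P ` Y)"
    by (rule linear_subspace_image[OF matrix_vector_mul_linear]) (auto simp: Y_def subspace_def)
  moreover have "subspace T"
    by (auto simp: T_def subspace_def)
  ultimately obtain y where y: "y \<in> Y" "P *v y \<in> T" and "P *v y \<noteq> 0"
    using subspaces_Int_nonzero by blast
  then have "y \<noteq> 0"
    by auto
  show thesis
    by (rule that[of y]) (use y \<open>y \<noteq> 0\<close> in \<open>auto simp: Y_def T_def\<close>)
qed

text \<open>Courant-Fischer, with \<open>w\<close> a nonzero vector in the image under \<open>P\<close> of the coordinates
  \<open>j \<ge> k\<close> which is supported on the coordinates \<open>i \<le> k\<close>:
  \<open>\<lambda>\<^sub>k |w|\<^sup>2 \<le> w \<bullet> M w \<le> d\<^sub>k |w|\<^sup>2\<close>.\<close>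

lemma eigvals_le_of_quadratic_form_le:
  fixes M :: "real^('n::{finite,linorder})^('n::{finite,linorder})"
    and d :: "real^('n::{finite,linorder})"
  assumes sym: "transpose M = M"
    and d_sorted: "\<And>i j. i \<le> j \<Longrightarrow> d $ i \<le> d $ j"
    and quad: "\<And>w. w \<bullet> (M *v w) \<le> (\<Sum>i\<in>UNIV. d $ i * (w $ i)\<^sup>2)"
  shows "eigvals M $ k \<le> d $ k"
proof -
  let ?L = "eigvals M"
  obtain P where P: "orthogonal_matrix P" and PMP: "transpose P ** M ** P = diag_mat ?L"
    using symmetric_matrix_eigvals_diagonalization[OF sym] by blast
  obtain y where y: "\<And>j. \<not> k \<le> j \<Longrightarrow> y $ j = 0"
    and w: "\<And>i. \<not> i \<le> k \<Longrightarrow> (P *v y) $ i = 0" and "y \<noteq> 0"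
    using orthogonal_image_meets_initial_coordinates[OF P] by blast
  define w where "w = P *v y"
  have ww: "w \<bullet> w = y \<bullet> y"
    using inner_matrix_conj[of P y "mat 1" y] P by (simp add: w_def orthogonal_matrix)
  have sum_squares: "x \<bullet> x = (\<Sum>i\<in>UNIV. (x $ i)\<^sup>2)" for x :: "real^('n::{finite,linorder})"
    by (simp add: inner_vec_def power2_eq_square)
  have "?L $ k * (y $ j)\<^sup>2 \<le> ?L $ j * (y $ j)\<^sup>2" for j
    using y[of j] eigvals_sorted[OF sym, of k j] by (cases "k \<le> j") (auto intro: mult_right_mono)
  then have "?L $ k * (y \<bullet> y) \<le> (\<Sum>j\<in>UNIV. ?L $ j * (y $ j)\<^sup>2)"
    by (simp add: sum_squares sum_distrib_left sum_mono)
  also have "\<dots> = w \<bullet> (M *v w)"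
    by (simp add: w_def inner_matrix_conj PMP inner_diag_mat)
  also have "\<dots> \<le> (\<Sum>i\<in>UNIV. d $ i * (w $ i)\<^sup>2)"
    by (rule quad)
  also have "\<dots> \<le> d $ k * (w \<bullet> w)"
  proof -
    have "d $ i * (w $ i)\<^sup>2 \<le> d $ k * (w $ i)\<^sup>2" for i
      using w[of i] d_sorted[of i k] by (cases "i \<le> k") (auto simp: w_def intro: mult_right_mono)
    then show ?thesis
      by (simp add: sum_squares sum_distrib_left sum_mono)
  qed
  finally have "?L $ k * (y \<bullet> y) \<le> d $ k * (y \<bullet> y)"
    by (simp only: ww)
  moreover have "y \<bullet> y > 0"
    using \<open>y \<noteq> 0\<close> by simp
  ultimately show ?thesis
    by simp
qed

lemma eigvals_diag_minus_rank_one: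
  fixes d b :: "real^('n::{finite,linorder})"
  assumes d_sorted: "\<And>i j. i \<le> j \<Longrightarrow> d $ i \<le> d $ j" and \<gamma>: "\<gamma> \<ge> 0"
  defines "M \<equiv> (\<chi> i j. (if i = j then d $ i else 0) - \<gamma> * b $ i * b $ j)
    :: real^('n::{finite,linorder})^('n::{finite,linorder})"
  shows "eigvals M $ k \<le> d $ k"
    and "(\<Sum>i\<in>UNIV. eigvals M $ i) = (\<Sum>i\<in>UNIV. d $ i) - \<gamma> * (b \<bullet> b)"
proof -
  have sym: "transpose M = M"
    by (simp add: M_def transpose_def vec_eq_iff mult_ac)
  have Mw: "M *v w = (\<chi> i. d $ i * w $ i - \<gamma> * (b \<bullet> w) * b $ i)" for w
    by (simp add: M_def vec_eq_iff matrix_vector_mult_def inner_vec_def right_diff_distrib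
        sum_subtractf sum_distrib_left if_distrib[of "\<lambda>z. _ * z"] mult_ac cong: if_cong)
  have quad: "w \<bullet> (M *v w) \<le> (\<Sum>i\<in>UNIV. d $ i * (w $ i)\<^sup>2)" for w
  proof -
    have "w \<bullet> (M *v w) = (\<Sum>i\<in>UNIV. d $ i * (w $ i)\<^sup>2) - \<gamma> * (b \<bullet> w)\<^sup>2"
      by (simp add: Mw inner_vec_def power2_eq_square right_diff_distrib sum_subtractf
          sum_distrib_left mult_ac)
    then show ?thesis
      using \<gamma> by simp
  qed
  show "eigvals M $ k \<le> d $ k"
    by (rule eigvals_le_of_quadratic_form_le[of M d, OF sym d_sorted quad])
  have "trace M = (\<Sum>i\<in>UNIV. d $ i) - \<gamma> * (b \<bullet> b)"
    by (simp add: M_def trace_def inner_vec_def sum_subtractf sum_distrib_left mult_ac)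
  then show "(\<Sum>i\<in>UNIV. eigvals M $ i) = (\<Sum>i\<in>UNIV. d $ i) - \<gamma> * (b \<bullet> b)"
    by (simp add: sum_eigvals_eq_trace[OF sym])
qed

section \<open>The Hessian of a function of a diagonal quadratic form\<close>

lemma diag_mat_quadratic_form_has_derivative:
  "((\<lambda>y. (1/2) * (y \<bullet> (diag_mat a *v y))) has_derivative (\<lambda>h. (diag_mat a *v y) \<bullet> h)) (at y)"
proof -
  have "((\<lambda>y. y \<bullet> (diag_mat a *v y)) has_derivative
      (\<lambda>h. y \<bullet> (diag_mat a *v h) + h \<bullet> (diag_mat a *v y))) (at y)"
    by (intro has_derivative_inner has_derivative_ident bounded_linear.has_derivative[OF matrix_vector_mul_bounded_linear])
  then have "((\<lambda>y. (1/2) * (y \<bullet> (diag_mat a *v y))) has_derivative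
      (\<lambda>h. (1/2) * (y \<bullet> (diag_mat a *v h) + h \<bullet> (diag_mat a *v y)))) (at y)"
    by (rule has_derivative_mult_right)
  moreover have "(\<lambda>h. (1/2) * (y \<bullet> (diag_mat a *v h) + h \<bullet> (diag_mat a *v y))) = (\<lambda>h. (diag_mat a *v y) \<bullet> h)"
    by (auto simp: fun_eq_iff diag_mat_mult_vector inner_vec_def algebra_simps)
  ultimately show ?thesis
    by simp
qed

lemma hessian_radial_diag_quadratic:
  fixes a x :: "real^'n" and u u' u'' :: "real \<Rightarrow> real"
  assumes u_deriv: "\<forall>s>0. (u has_real_derivative u' s) (at s)"
    and u'_deriv: "\<forall>s>0. (u' has_real_derivative u'' s) (at s)"
    and s_pos: "(1/2) * (x \<bullet> (diag_mat a *v x)) > 0"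
  shows "hessian (\<lambda>y. u ((1/2) * (y \<bullet> (diag_mat a *v y)))) x =
    (\<chi> i j. u' ((1/2) * (x \<bullet> (diag_mat a *v x))) * (if i = j then a $ i else 0)
       + u'' ((1/2) * (x \<bullet> (diag_mat a *v x))) * (a $ i * x $ i) * (a $ j * x $ j))"
proof -
  have axis_nth_eq: "axis i (1::real) $ j = (if j = i then 1 else 0)" for i j :: 'n
    by (simp add: axis_def)
  define q where "q y = (1/2) * (y \<bullet> (diag_mat a *v y))" for y :: "real^'n"
  define U where "U = {y. q y > 0}"
  have q_deriv: "(q has_derivative (\<lambda>h. (diag_mat a *v y) \<bullet> h)) (at y)" for y
    unfolding q_def by (rule diag_mat_quadratic_form_has_derivative)
  then have "continuous_on UNIV q"
    by (metis differentiable_def differentiable_imp_continuous_on differentiable_on_def)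
  then have "open U"
    unfolding U_def by (simp add: open_Collect_less)
  have "x \<in> U"
    using s_pos by (simp add: U_def q_def)
  have grad: "frechet_derivative (\<lambda>y. u (q y)) (at y) (axis j 1) = a $ j * y $ j * u' (q y)"
    if "y \<in> U" for y j
  proof -
    have "((\<lambda>y. u (q y)) has_derivative (\<lambda>h. ((diag_mat a *v y) \<bullet> h) * u' (q y))) (at y)"
      using DERIV_compose_FDERIV[OF u_deriv[rule_format] q_deriv] that by (simp add: U_def)
    then show ?thesis
      by (simp add: frechet_derivative_at[symmetric] diag_mat_mult_vector inner_axis)
  qed
  have "((\<lambda>y. a $ j * y $ j * u' (q y)) has_derivative
      (\<lambda>h. a $ j * x $ j * (((diag_mat a *v x) \<bullet> h) * u'' (q x)) + a $ j * h $ j * u' (q x))) (at x)" for j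
  proof -
    have "((\<lambda>y. u' (q y)) has_derivative (\<lambda>h. ((diag_mat a *v x) \<bullet> h) * u'' (q x))) (at x)"
      using DERIV_compose_FDERIV[OF u'_deriv[rule_format] q_deriv] \<open>x \<in> U\<close> by (simp add: U_def)
    then show ?thesis
      by (intro has_derivative_mult has_derivative_mult_right
          bounded_linear.has_derivative[OF bounded_linear_vec_nth] has_derivative_ident) simp
  qed
  then have second: "((\<lambda>y. frechet_derivative (\<lambda>y. u (q y)) (at y) (axis j 1)) has_derivative
      (\<lambda>h. a $ j * x $ j * (((diag_mat a *v x) \<bullet> h) * u'' (q x)) + a $ j * h $ j * u' (q x))) (at x)" for j
    by (rule has_derivative_transform_within_open[OF _ \<open>open U\<close> \<open>x \<in> U\<close>]) (simp add: grad)
  have "frechet_derivative (\<lambda>y. frechet_derivative (\<lambda>y. u (q y)) (at y) (axis j 1)) (at x) (axis i 1)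
      = u' (q x) * (if i = j then a $ i else 0) + u'' (q x) * (a $ i * x $ i) * (a $ j * x $ j)" for i j
    unfolding frechet_derivative_at[OF second, symmetric]
    by (cases "i = j") (simp_all add: diag_mat_mult_vector inner_axis axis_nth_eq algebra_simps)
  then show ?thesis
    unfolding hessian_def q_def[symmetric] by simp
qed

lemma eigvals_hessian_radial_bounds:
  fixes a x :: "real^('n::{finite,linorder})" and u u' u'' :: "real \<Rightarrow> real"
  assumes u_deriv: "\<forall>s>0. (u has_real_derivative u' s) (at s)"
    and u'_deriv: "\<forall>s>0. (u' has_real_derivative u'' s) (at s)"
    and a_pos: "\<And>i. 0 < a $ i" and a_sorted: "\<And>i j. i \<le> j \<Longrightarrow> a $ i \<le> a $ j"
    and s: "s = (1/2) * (x \<bullet> (diag_mat a *v x))" "s > 0"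
    and u': "u' s \<ge> 0" and u'': "u'' s \<le> 0"
  defines "L \<equiv> eigvals (hessian (\<lambda>y. u ((1/2) * (y \<bullet> (diag_mat a *v y)))) x)"
  shows "L $ i \<le> u' s * a $ i"
    and "(\<Sum>i\<in>UNIV. u' s * a $ i - L $ i) \<le> 2 * a $ Max UNIV * (- s * u'' s)"
proof -
  define b where "b = (\<chi> i. a $ i * x $ i)"
  have "hessian (\<lambda>y. u ((1/2) * (y \<bullet> (diag_mat a *v y)))) x
      = (\<chi> i j. u' s * (if i = j then a $ i else 0) + u'' s * (a $ i * x $ i) * (a $ j * x $ j))"
    unfolding s(1) by (rule hessian_radial_diag_quadratic[OF u_deriv u'_deriv]) (use s in simp)
  also have "\<dots> = (\<chi> i j. (if i = j then (u' s *\<^sub>R a) $ i else 0) - (- u'' s) * b $ i * b $ j)"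
    by (simp add: b_def vec_eq_iff)
  finally have "hessian (\<lambda>y. u ((1/2) * (y \<bullet> (diag_mat a *v y)))) x
      = (\<chi> i j. (if i = j then (u' s *\<^sub>R a) $ i else 0) - (- u'' s) * b $ i * b $ j)" .
  moreover have "(u' s *\<^sub>R a) $ i \<le> (u' s *\<^sub>R a) $ j" if "i \<le> j" for i j
    using a_sorted[OF that] u' by (simp add: mult_left_mono)
  ultimately have "L $ k \<le> (u' s *\<^sub>R a) $ k"
    and L_sum: "(\<Sum>i\<in>UNIV. L $ i) = (\<Sum>i\<in>UNIV. (u' s *\<^sub>R a) $ i) - (- u'' s) * (b \<bullet> b)" for k
    using eigvals_diag_minus_rank_one[where d = "u' s *\<^sub>R a" and \<gamma> = "- u'' s" and b = b] u'' by (simp_all add: L_def)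
  then show "L $ i \<le> u' s * a $ i"
    by simp
  have "b \<bullet> b \<le> a $ Max UNIV * (2 * s)"
  proof -
    have "a $ i * (a $ i * (x $ i)\<^sup>2) \<le> a $ Max UNIV * (a $ i * (x $ i)\<^sup>2)" for i
      using a_sorted[of i "Max UNIV"] a_pos[of i] by (intro mult_right_mono) auto
    then have "(a $ i * x $ i)\<^sup>2 \<le> a $ Max UNIV * (a $ i * (x $ i)\<^sup>2)" for i
      by (simp add: power2_eq_square mult_ac)
    then show ?thesis
      unfolding s(1) by (simp add: b_def inner_vec_def diag_mat_mult_vector sum_distrib_left sum_mono
          power2_eq_square mult_ac)
  qed
  then have "(- u'' s) * (b \<bullet> b) \<le> (- u'' s) * (a $ Max UNIV * (2 * s))"
    by (rule mult_left_mono) (use u'' in simp)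
  then show "(\<Sum>i\<in>UNIV. u' s * a $ i - L $ i) \<le> 2 * a $ Max UNIV * (- s * u'' s)"
    using L_sum by (simp add: sum_subtractf algebra_simps)
qed

section \<open>Comparison near the eigenvalues of the quadratic form\<close>

lemma smooth_on_partial_derivative_isCont:
  assumes "smooth_on S g" "x \<in> S"
  shows "isCont (\<lambda>y. frechet_derivative g (at y) (axis i 1)) x"
proof -
  have "smooth_on S (\<lambda>y. frechet_derivative g (at y) (axis i 1))"
    using assms(1) by (cases rule: smooth_on.cases) auto
  then have "(\<lambda>y. frechet_derivative g (at y) (axis i 1)) differentiable (at x)"
    using assms(2) by (cases rule: smooth_on.cases) auto
  then show ?thesis
    by (rule differentiable_imp_continuous_within)
qed

lemma smooth_on_partial_derivatives_near:
  fixes f :: "real^'n \<Rightarrow> real"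
  assumes smooth: "smooth_on S f" and S: "open S" "a \<in> S"
    and f': "\<And>x. x \<in> S \<Longrightarrow> (f has_derivative f' x) (at x)" and "\<epsilon> > 0"
  obtains r where "r > 0" "ball a r \<subseteq> S"
    "\<And>\<xi> i. \<xi> \<in> ball a r \<Longrightarrow> \<bar>f' \<xi> (axis i 1) - f' a (axis i 1)\<bar> < \<epsilon>"
proof -
  let ?D = "\<lambda>i y. frechet_derivative f (at y) (axis i 1)"
  have "(?D i \<longlongrightarrow> ?D i a) (nhds a)" for i
    using smooth_on_partial_derivative_isCont[OF smooth S(2), of i] unfolding isCont_def
    by (rule tendsto_at_iff_tendsto_nhds[THEN iffD1])
  then have "eventually (\<lambda>y. \<forall>i. dist (?D i y) (?D i a) < \<epsilon>) (nhds a)"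
    using \<open>\<epsilon> > 0\<close> by (intro eventually_all_finite) (simp add: tendstoD)
  moreover have "eventually (\<lambda>y. y \<in> S) (nhds a)"
    using S by (rule eventually_nhds_in_open)
  ultimately have "eventually (\<lambda>y. (\<forall>i. dist (?D i y) (?D i a) < \<epsilon>) \<and> y \<in> S) (nhds a)"
    by (rule eventually_conj)
  then obtain r where "r > 0"
    and r: "\<forall>y. dist y a < r \<longrightarrow> (\<forall>i. dist (?D i y) (?D i a) < \<epsilon>) \<and> y \<in> S"
    unfolding eventually_nhds_metric by blast
  have "f' y = frechet_derivative f (at y)" if "y \<in> S" for y
    using f'[OF that] by (rule frechet_derivative_at)
  then show thesis
    using \<open>r > 0\<close> r S(2) by (intro that[of r]) (auto simp: dist_commute dist_real_def)
qed

lemma convex_has_derivative_nonneg_imp_le: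
  fixes f :: "'a::real_normed_vector \<Rightarrow> real"
  assumes B: "convex B" "x \<in> B" "y \<in> B"
    and f': "\<And>\<xi>. \<xi> \<in> B \<Longrightarrow> (f has_derivative f' \<xi>) (at \<xi>)"
    and nonneg: "\<And>\<xi>. \<xi> \<in> B \<Longrightarrow> f' \<xi> (y - x) \<ge> 0"
  shows "f x \<le> f y"
proof -
  define p where "p t = x + t *\<^sub>R (y - x)" for t :: real
  have p: "p t \<in> B" if "0 \<le> t" "t \<le> 1" for t
    using convexD[OF B(1,3,2), of t "1 - t"] that by (simp add: p_def algebra_simps)
  have "(p has_derivative (\<lambda>h. h *\<^sub>R (y - x))) (at t within {0..1})" for t
    unfolding p_def by (auto intro!: derivative_eq_intros)
  then have "((\<lambda>t. f (p t)) has_derivative (\<lambda>h. f' (p t) (h *\<^sub>R (y - x)))) (at t within {0..1})"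
    if "0 \<le> t" "t \<le> 1" for t
    using f'[OF p[OF that]] by (rule has_derivative_compose)
  then obtain t where t: "0 \<le> t" "t \<le> 1" and "f (p 1) - f (p 0) = f' (p t) (y - x)"
    using mvt_very_simple[of 0 1 "\<lambda>t. f (p t)" "\<lambda>t h. f' (p t) (h *\<^sub>R (y - x))"] by auto
  then show ?thesis
    using nonneg[OF p[OF t]] by (simp add: p_def)
qed

lemma linear_vec_expansion:
  fixes g :: "real^'n \<Rightarrow> real"
  assumes "linear g"
  shows "g v = (\<Sum>i\<in>UNIV. v $ i * g (axis i 1))"
proof -
  have "g v = g (\<Sum>i\<in>UNIV. v $ i *\<^sub>R axis i 1)"
    using basis_expansion[of v] by (simp add: scalar_mult_eq_scaleR)
  also have "\<dots> = (\<Sum>i\<in>UNIV. v $ i * g (axis i 1))"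
    using assms by (simp add: linear_sum linear_scale)
  finally show ?thesis .
qed

lemma transfer_to_coordinate_increases:
  fixes f :: "real^'n \<Rightarrow> real" and e :: "real^'n"
  assumes B: "convex B" "V \<in> B" "V + h *\<^sub>R axis k 1 - e \<in> B"
    and f': "\<And>\<xi>. \<xi> \<in> B \<Longrightarrow> (f has_derivative f' \<xi>) (at \<xi>)"
    and gain: "\<And>\<xi>. \<xi> \<in> B \<Longrightarrow> (\<Sum>i\<in>UNIV. e $ i * f' \<xi> (axis i 1)) \<le> h * f' \<xi> (axis k 1)"
  shows "f V \<le> f (V + h *\<^sub>R axis k 1 - e)"
proof (rule convex_has_derivative_nonneg_imp_le[OF B f'])
  fix \<xi> assume "\<xi> \<in> B"
  then have "linear (f' \<xi>)"
    using f' has_derivative_linear by blast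
  then have "f' \<xi> (V + h *\<^sub>R axis k 1 - e - V) = h * f' \<xi> (axis k 1) - (\<Sum>i\<in>UNIV. e $ i * f' \<xi> (axis i 1))"
    using linear_vec_expansion[of "f' \<xi>" e] by (simp add: linear_diff linear_scale)
  then show "0 \<le> f' \<xi> (V + h *\<^sub>R axis k 1 - e - V)"
    using gain[OF \<open>\<xi> \<in> B\<close>] by simp
qed

lemma weighted_sum_le_dominant_weight:
  fixes e F :: "'i::finite \<Rightarrow> real"
  assumes e: "\<And>i. e i \<ge> 0" and e_sum: "(\<Sum>i\<in>UNIV. e i) \<le> 2 * A * g"
    and g: "g \<ge> 0" and A: "A \<ge> 0" and \<delta>: "\<delta> > 0" and \<epsilon>: "\<epsilon> \<ge> 0" "\<epsilon> * (\<delta> + 4 * A) \<le> \<delta> * c"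
    and F_le: "\<And>i. F i \<le> F k + 2 * \<epsilon>" and F_k: "c - \<epsilon> \<le> F k"
  shows "(\<Sum>i\<in>UNIV. e i * F i) \<le> (2 * A + \<delta>) * g * F k"
proof -
  have "\<delta> * \<epsilon> \<le> \<epsilon> * (\<delta> + 4 * A)"
    using \<epsilon>(1) A by (simp add: algebra_simps)
  then have "\<delta> * \<epsilon> \<le> \<delta> * c"
    using \<epsilon>(2) by (rule order_trans)
  then have "\<epsilon> \<le> c"
    using \<delta> by simp
  then have "F k + 2 * \<epsilon> \<ge> 0"
    using \<epsilon>(1) F_k by simp
  have "4 * A * \<epsilon> \<le> \<delta> * F k"
    using mult_left_mono[OF F_k, of \<delta>] \<delta> \<epsilon>(2) by (simp add: algebra_simps)
  have "(\<Sum>i\<in>UNIV. e i * F i) \<le> (\<Sum>i\<in>UNIV. e i * (F k + 2 * \<epsilon>))"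
    using e F_le by (intro sum_mono mult_left_mono) auto
  also have "\<dots> = (\<Sum>i\<in>UNIV. e i) * (F k + 2 * \<epsilon>)"
    by (simp add: sum_distrib_right)
  also have "\<dots> \<le> 2 * A * g * (F k + 2 * \<epsilon>)"
    using e_sum \<open>F k + 2 * \<epsilon> \<ge> 0\<close> by (rule mult_right_mono)
  also have "\<dots> \<le> (2 * A + \<delta>) * g * F k"
    using mult_left_mono[OF \<open>4 * A * \<epsilon> \<le> \<delta> * F k\<close> g] by (simp add: algebra_simps)
  finally show ?thesis .
qed

lemma dominant_partial_transfer_increases:
  fixes f :: "real^'n \<Rightarrow> real" and a V e :: "real^'n"
  assumes f_deriv: "\<And>\<xi>. \<xi> \<in> ball a r \<Longrightarrow> (f has_derivative f' \<xi>) (at \<xi>)"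
    and near: "\<And>\<xi> i. \<xi> \<in> ball a r \<Longrightarrow> \<bar>f' \<xi> (axis i 1) - f' a (axis i 1)\<bar> < \<epsilon>"
    and max: "\<And>i. f' a (axis i 1) \<le> f' a (axis k 1)"
    and \<epsilon>: "\<epsilon> * (\<delta> + 4 * A) = \<delta> * f' a (axis k 1)" and \<delta>: "\<delta> > 0" and A: "A \<ge> 0"
    and g: "g \<ge> 0" and e: "\<And>i. 0 \<le> e $ i" and e_sum: "(\<Sum>i\<in>UNIV. e $ i) \<le> 2 * A * g"
    and V: "V \<in> ball a r" "V + ((2 * A + \<delta>) * g) *\<^sub>R axis k 1 - e \<in> ball a r"
  shows "f V \<le> f (V + ((2 * A + \<delta>) * g) *\<^sub>R axis k 1 - e)"
proof (rule transfer_to_coordinate_increases[OF convex_ball V f_deriv])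
  fix \<xi> assume \<xi>: "\<xi> \<in> ball a r"
  show "(\<Sum>i\<in>UNIV. e $ i * f' \<xi> (axis i 1)) \<le> (2 * A + \<delta>) * g * f' \<xi> (axis k 1)"
  proof (rule weighted_sum_le_dominant_weight[OF e e_sum g A \<delta>])
    show "0 \<le> \<epsilon>" "\<epsilon> * (\<delta> + 4 * A) \<le> \<delta> * f' a (axis k 1)"
      using near[OF \<xi>, of k] \<epsilon> by simp_all
    show "f' \<xi> (axis i 1) \<le> f' \<xi> (axis k 1) + 2 * \<epsilon>" for i
      using near[OF \<xi>, of i] near[OF \<xi>, of k] max[of i] by linarith
    show "f' a (axis k 1) - \<epsilon> \<le> f' \<xi> (axis k 1)"
      using near[OF \<xi>, of k] by linarith
  qed
qed

lemma dist_scaleR_diff_le: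
  fixes a e :: "real^'n" and c A :: real
  assumes "\<And>i. 0 \<le> a $ i" "\<And>i. a $ i \<le> A"
  shows "dist a (c *\<^sub>R a - e) \<le> CARD('n) * A * \<bar>c - 1\<bar> + (\<Sum>i\<in>UNIV. \<bar>e $ i\<bar>)"
proof -
  have "\<bar>a $ i - (c * a $ i - e $ i)\<bar> \<le> A * \<bar>c - 1\<bar> + \<bar>e $ i\<bar>" for i
  proof -
    have "\<bar>a $ i - (c * a $ i - e $ i)\<bar> = \<bar>(1 - c) * a $ i + e $ i\<bar>"
      by (simp add: algebra_simps)
    also have "\<dots> \<le> \<bar>c - 1\<bar> * a $ i + \<bar>e $ i\<bar>"
      using assms(1)[of i] abs_triangle_ineq[of "(1 - c) * a $ i" "e $ i"]
      by (simp add: abs_mult abs_minus_commute)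
    also have "\<dots> \<le> A * \<bar>c - 1\<bar> + \<bar>e $ i\<bar>"
      using assms(2)[of i] by (simp add: mult_right_mono mult.commute)
    finally show ?thesis .
  qed
  then have "(\<Sum>i\<in>UNIV. \<bar>(a - (c *\<^sub>R a - e)) $ i\<bar>) \<le> (\<Sum>i\<in>UNIV. A * \<bar>c - 1\<bar> + \<bar>e $ i\<bar>)"
    by (intro sum_mono) simp
  then show ?thesis
    using norm_le_l1_cart[of "a - (c *\<^sub>R a - e)"] by (simp add: dist_norm sum.distrib)
qed

lemma radial_hessian_comparison:
  fixes f :: "real^('n::{finite,linorder}) \<Rightarrow> real"
    and f' :: "real^('n::{finite,linorder}) \<Rightarrow> real^('n::{finite,linorder}) \<Rightarrow> real"
    and a x :: "real^('n::{finite,linorder})" and u u' u'' :: "real \<Rightarrow> real"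
  assumes u_deriv: "\<forall>s>0. (u has_real_derivative u' s) (at s)"
    and u'_deriv: "\<forall>s>0. (u' has_real_derivative u'' s) (at s)"
    and a_pos: "\<And>i. 0 < a $ i" and a_sorted: "\<And>i j. i \<le> j \<Longrightarrow> a $ i \<le> a $ j"
    and f_deriv: "\<And>\<xi>. \<xi> \<in> ball a r \<Longrightarrow> (f has_derivative f' \<xi>) (at \<xi>)"
    and near: "\<And>\<xi> i. \<xi> \<in> ball a r \<Longrightarrow> \<bar>f' \<xi> (axis i 1) - f' a (axis i 1)\<bar> < \<epsilon>"
    and max: "\<And>i. f' a (axis i 1) \<le> f' a (axis (Min UNIV) 1)"
    and \<epsilon>: "\<epsilon> * (\<delta> + 4 * a $ Max UNIV) = \<delta> * f' a (axis (Min UNIV) 1)" and \<delta>: "\<delta> > 0"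
    and s: "s = (1/2) * (x \<bullet> (diag_mat a *v x))" "s > 0" and u': "u' s > 0" and u'': "u'' s \<le> 0"
    and small: "CARD('n) * a $ Max UNIV * \<bar>u' s - 1\<bar> + (2 * a $ Max UNIV + \<delta>) * \<bar>s * u'' s\<bar> < r"
  defines "L \<equiv> eigvals (hessian (\<lambda>y. u ((1/2) * (y \<bullet> (diag_mat a *v y)))) x)"
    and "V \<equiv> \<chi> i. if i = Min UNIV then a $ i * u' s + (2 * a $ Max UNIV + \<delta>) * s * u'' s
                 else a $ i * u' s"
  shows "L \<in> ball a r" and "V \<in> ball a r" and "f V \<le> f L"
proof -
  let ?k = "Min (UNIV :: ('n::{finite,linorder}) set)" and ?A = "a $ Max UNIV"
  define g where "g = - s * u'' s"
  define h where "h = (2 * ?A + \<delta>) * g"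
  define e where "e = u' s *\<^sub>R a - L"
  have g: "g \<ge> 0" "\<bar>s * u'' s\<bar> = g"
    using s(2) u'' by (auto simp: g_def mult_nonneg_nonpos)
  have a_le: "a $ i \<le> ?A" for i
    using a_sorted by simp
  have e_nonneg: "0 \<le> e $ i" for i
    using eigvals_hessian_radial_bounds(1)[OF u_deriv u'_deriv a_pos a_sorted s] u' u''
    by (simp add: e_def L_def)
  moreover have e_sum: "(\<Sum>i\<in>UNIV. e $ i) \<le> 2 * ?A * g"
    using eigvals_hessian_radial_bounds(2)[OF u_deriv u'_deriv a_pos a_sorted s] u' u''
    by (simp add: e_def L_def g_def)
  moreover have "0 \<le> \<delta> * g"
    using g \<delta> by simp
  ultimately have e_abs: "(\<Sum>i\<in>UNIV. \<bar>e $ i\<bar>) \<le> h"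
    by (simp add: h_def algebra_simps)
  have V_eq: "V = u' s *\<^sub>R a - h *\<^sub>R axis ?k 1" and L_eq: "L = V + h *\<^sub>R axis ?k 1 - e"
    by (simp_all add: V_def e_def h_def g_def vec_eq_iff axis_def algebra_simps)
  have dist: "dist a (u' s *\<^sub>R a - w) \<le> CARD('n) * ?A * \<bar>u' s - 1\<bar> + (\<Sum>i\<in>UNIV. \<bar>w $ i\<bar>)" for w
    using a_pos a_le by (intro dist_scaleR_diff_le) (auto intro: less_imp_le)
  show "L \<in> ball a r"
    using dist[of e] e_abs small g by (simp add: e_def h_def)
  have "h \<ge> 0"
    using g a_pos[of "Max UNIV"] \<delta> by (simp add: h_def)
  then have "(\<Sum>i\<in>UNIV. \<bar>(h *\<^sub>R axis ?k 1) $ i\<bar>) = h"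
    unfolding axis_def by (simp add: if_distrib[of "\<lambda>z. h * z"] cong: if_cong)
  then have "dist a V \<le> CARD('n) * ?A * \<bar>u' s - 1\<bar> + h"
    using dist[of "h *\<^sub>R axis ?k 1"] by (simp add: V_eq)
  also have "\<dots> < r"
    using small by (simp add: g(2) h_def)
  finally show V: "V \<in> ball a r"
    by simp
  show "f V \<le> f L"
    unfolding L_eq h_def
  proof (rule dominant_partial_transfer_increases)
    show "0 \<le> ?A"
      using a_pos[of "Max UNIV"] by simp
    show "V + ((2 * ?A + \<delta>) * g) *\<^sub>R axis ?k 1 - e \<in> ball a r"
      using \<open>L \<in> ball a r\<close> L_eq by (simp add: h_def)
  qed (fact f_deriv near max \<epsilon> \<delta> g(1) e_nonneg e_sum V)+
qed

theorem lemma2p2: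
  fixes \<Gamma> :: "(real^('n::{finite,linorder})) set"
    and f :: "real^('n::{finite,linorder}) \<Rightarrow> real"
    and f' :: "real^('n::{finite,linorder}) \<Rightarrow> real^('n::{finite,linorder}) \<Rightarrow> real"
    and a :: "real^('n::{finite,linorder})"
    and u u' u'' :: "real \<Rightarrow> real"
    and \<delta> :: real
  assumes Gamma_open: "open \<Gamma>"
    and Gamma_convex: "convex \<Gamma>"
    and Gamma_proper: "\<Gamma> \<noteq> UNIV"
    and Gamma_cone: "\<forall>x\<in>\<Gamma>. \<forall>t>0. t *\<^sub>R x \<in> \<Gamma>"
    and Gamma_pos: "{x. \<forall>i. x $ i > 0} \<subseteq> \<Gamma>"
    and Gamma_sum: "\<Gamma> \<subseteq> {x. (\<Sum>i\<in>UNIV. x $ i) > 0}"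
    and f_symm: "\<forall>x\<in>\<Gamma>. \<forall>\<sigma>. \<sigma> permutes (UNIV :: ('n::{finite,linorder}) set) \<longrightarrow>
                    (\<chi> i. x $ \<sigma> i) \<in> \<Gamma> \<and> f (\<chi> i. x $ \<sigma> i) = f x"
    and f_smooth: "smooth_on \<Gamma> f"
    and f_deriv: "\<forall>x\<in>\<Gamma>. (f has_derivative f' x) (at x)"
    and f_incr: "\<forall>x\<in>\<Gamma>. \<forall>i. f' x (axis i 1) > 0"
    and a_pos: "\<forall>i. a $ i > 0"
    and a_sorted: "\<forall>i j. i \<le> j \<longrightarrow> a $ i \<le> a $ j"
    and f_max1: "\<forall>i. f' a (axis i 1) \<le> f' a (axis (Min UNIV) 1)"
    and u_deriv: "\<forall>s>0. (u has_real_derivative u' s) (at s)"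
    and u'_deriv: "\<forall>s>0. (u' has_real_derivative u'' s) (at s)"
    and u'_pos: "\<forall>s>0. u' s > 0"
    and u''_nonpos: "\<forall>s>0. u'' s \<le> 0"
    and u'_lim: "(u' \<longlongrightarrow> 1) at_top"
    and su''_lim: "((\<lambda>s. s * u'' s) \<longlongrightarrow> 0) at_top"
    and delta_pos: "\<delta> > 0"
  shows "\<exists>sbar>0. \<forall>x :: real^('n::{finite,linorder}).
           (1/2) * (x \<bullet> (diag_mat a *v x)) > sbar \<longrightarrow>
           (let s = (1/2) * (x \<bullet> (diag_mat a *v x));
                L = eigvals (hessian (\<lambda>y. u ((1/2) * (y \<bullet> (diag_mat a *v y)))) x);
                V = (\<chi> i. if i = Min UNIV
                           then a $ i * u' s + (2 * a $ Max UNIV + \<delta>) * s * u'' s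
                           else a $ i * u' s)
            in L \<in> \<Gamma> \<and> V \<in> \<Gamma> \<and> f L \<ge> f V)"
proof -
  let ?k = "Min (UNIV :: ('n::{finite,linorder}) set)" and ?A = "a $ Max UNIV"
  let ?err = "\<lambda>s. CARD('n) * ?A * \<bar>u' s - 1\<bar> + (2 * ?A + \<delta>) * \<bar>s * u'' s\<bar>"
  have "a \<in> \<Gamma>"
    using Gamma_pos a_pos by auto
  have "?A > 0" "f' a (axis ?k 1) > 0"
    using a_pos f_incr \<open>a \<in> \<Gamma>\<close> by auto
  define \<epsilon> where "\<epsilon> = \<delta> * f' a (axis ?k 1) / (\<delta> + 4 * ?A)"
  have "\<epsilon> > 0" and \<epsilon>: "\<epsilon> * (\<delta> + 4 * ?A) = \<delta> * f' a (axis ?k 1)"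
    using delta_pos \<open>?A > 0\<close> \<open>f' a (axis ?k 1) > 0\<close> by (simp_all add: \<epsilon>_def)
  obtain r where r: "r > 0" "ball a r \<subseteq> \<Gamma>"
    and near: "\<And>\<xi> i. \<xi> \<in> ball a r \<Longrightarrow> \<bar>f' \<xi> (axis i 1) - f' a (axis i 1)\<bar> < \<epsilon>"
    using smooth_on_partial_derivatives_near[OF f_smooth Gamma_open \<open>a \<in> \<Gamma>\<close> _ \<open>\<epsilon> > 0\<close>] f_deriv
    by blast
  have "(?err \<longlongrightarrow> 0) at_top"
    using u'_lim su''_lim
    by (intro tendsto_add_zero tendsto_mult_right_zero tendsto_rabs_zero) (simp_all add: LIM_zero)
  then have "eventually (\<lambda>s. ?err s < r) at_top"
    using \<open>r > 0\<close> by (rule order_tendstoD(2))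
  then obtain N where N: "\<And>s. s \<ge> N \<Longrightarrow> ?err s < r"
    unfolding eventually_at_top_linorder by blast
  show ?thesis
  proof (intro exI[of _ "max N 1"] conjI allI impI)
    fix x :: "real^('n::{finite,linorder})"
    define s where "s = (1/2) * (x \<bullet> (diag_mat a *v x))"
    assume "(1/2) * (x \<bullet> (diag_mat a *v x)) > max N 1"
    then have "s > 0" "s \<ge> N"
      by (auto simp: s_def)
    have "\<And>\<xi>. \<xi> \<in> ball a r \<Longrightarrow> (f has_derivative f' \<xi>) (at \<xi>)"
      using f_deriv r(2) by blast
    from radial_hessian_comparison[OF u_deriv u'_deriv a_pos[rule_format]
        a_sorted[rule_format] this near f_max1[rule_format] \<epsilon> delta_pos s_def \<open>s > 0\<close>
        u'_pos[rule_format, OF \<open>s > 0\<close>] u''_nonpos[rule_format, OF \<open>s > 0\<close>] N[OF \<open>s \<ge> N\<close>]]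
    show "let s = (1/2) * (x \<bullet> (diag_mat a *v x));
                L = eigvals (hessian (\<lambda>y. u ((1/2) * (y \<bullet> (diag_mat a *v y)))) x);
                V = (\<chi> i. if i = Min UNIV
                           then a $ i * u' s + (2 * a $ Max UNIV + \<delta>) * s * u'' s
                           else a $ i * u' s)
            in L \<in> \<Gamma> \<and> V \<in> \<Gamma> \<and> f L \<ge> f V"
      using r(2) unfolding Let_def s_def[symmetric] by blast
  qed simp
qed

end
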